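(* Let $\rho$ be a density operator on $\mathbb{C}^d$. Let $\rho'=U_A(\rho\otimes|0\rangle\langle0|^{\otimes d})U_A^\dagger$, a state of $d+1$ parties (the qudit and $d$ qubits), and let $\rho''=\Delta(\rho')$, a state of $d$ parties (the $d$ qubits). Then for every $2\le k\le d$ the following are equivalent: (i) $\mathrm{CN}(\rho)=k$; (ii) $\mathrm{ed}(\rho')=k+1$; (iii) $\mathrm{ed}(\rho'')=k$.
   Context: Fix an orthonormal (incoherent) basis $\{|i\rangle\}_{i=1}^d$ of $\mathbb{C}^d$. The coherence rank $\mathrm{CR}(|\psi\rangle)$ is the number of nonzero coefficients of $|\psi\rangle$ in this basis; the coherence number is $\mathrm{CN}(\rho)=\min_{\{p_i,|\psi_i\rangle\}}\max_i\mathrm{CR}(|\psi_i\rangle)$ over all pure-state decompositions $\rho=\sum_ip_i|\psi_i\rangle\langle\psi_i|$. For $1\le i\le d$, $|\underline{2^{d-i}}\rangle\in(\mathbb{C}^2)^{\otimes d}$ denotes $|0\rangle^{\otimes(i-1)}\otimes|1\rangle\otimes|0\rangle^{\otimes(d-i)}$. The activation unitary on $\mathbb{C}^d\otimes(\mathbb{C}^2)^{\otimes d}$ is $U_A=\sum_{i=1}^d|i\rangle\langle i|\otimes\mathbb{1}_2^{\otimes(i-1)}\otimes\sigma_x\otimes\mathbb{1}_2^{\otimes(d-i)}$ (so $U_A\,|i\rangle|0\rangle^{\otimes d}=|i\rangle|\underline{2^{d-i}}\rangle$). Let $\mathcal{F}$ be the Fourier unitary on $\mathbb{C}^d$, $\mathcal{F}|j\rangle=\frac1{\sqrt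 d}\sum_{m=1}^d e^{2\pi i jm/d}|m\rangle$, and for $m=1,\dots,d$ let $U_D^{(m)}=\bigotimes_{j=1}^d\big(|0\rangle\langle0|+e^{-2\pi i jm/d}|1\rangle\langle1|\big)$ acting on the $d$ qubits (the $j$-th factor on the $j$-th qubit). The one-way LOCC decoupling map is $\Delta(X)=\sum_{m=1}^d U_D^{(m)}\,\mathrm{Tr}_{\mathrm{qudit}}\big[(|m\rangle\langle m|\otimes\mathbb{1})(\mathcal{F}\otimes\mathbb{1})X(\mathcal{F}^\dagger\otimes\mathbb{1})\big]\,U_D^{(m)\dagger}$; on pure states it sends $\sum_ic_i|i\rangle|\underline{2^{d-i}}\rangle$ to $\sum_ic_i|\underline{2^{d-i}}\rangle$. A pure state of a multipartite system is $k$-producible if it is a tensor product of factors each pertaining to at most $k$ parties; a mixed state is $k$-producible if it is a convex combination of $k$-producible pure states; $\mathrm{ed}(\rho)=k$ (entanglement depth; genuinely $k$-partite entangled) means $\rho$ is $k$-producible but not $(k-1)$-producible. *)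

theory Defs
  imports Complex_Main "HOL-Library.Disjoint_Sets"
begin

text \<open>A vector on the space with orthonormal basis indexed by the finite set H is a
function 'a => complex vanishing outside H; an operator is a matrix 'a => 'a => complex
(matrix elements w.r.t. that basis) vanishing outside H x H.\<close>

definition is_state :: "'a set \<Rightarrow> ('a \<Rightarrow> complex) \<Rightarrow> bool" where
  "is_state H v \<longleftrightarrow> (\<forall>x. x \<notin> H \<longrightarrow> v x = 0) \<and> (\<Sum>x\<in>H. (cmod (v x))\<^sup>2) = 1"

definition density_op :: "'a set \<Rightarrow> ('a \<Rightarrow> 'a \<Rightarrow> complex) \<Rightarrow> bool" where
  "density_op H \<rho> \<longleftrightarrow>
     (\<forall>x y. x \<notin> H \<or> y \<notin> H \<longrightarrow> \<rho> x y = 0) \<and>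
     (\<forall>x\<in>H. \<forall>y\<in>H. \<rho> y x = cnj (\<rho> x y)) \<and>
     (\<forall>v :: 'a \<Rightarrow> complex.
        Im (\<Sum>x\<in>H. \<Sum>y\<in>H. cnj (v x) * \<rho> x y * v y) = 0 \<and>
        Re (\<Sum>x\<in>H. \<Sum>y\<in>H. cnj (v x) * \<rho> x y * v y) \<ge> 0) \<and>
     (\<Sum>x\<in>H. \<rho> x x) = 1"

definition pure_decomp :: "'a set \<Rightarrow> ('a \<Rightarrow> 'a \<Rightarrow> complex) \<Rightarrow> (real \<times> ('a \<Rightarrow> complex)) list \<Rightarrow> bool" where
  "pure_decomp H \<rho> ps \<longleftrightarrow>
     (\<forall>(p, v) \<in> set ps. p > 0 \<and> is_state H v) \<and>
     (\<Sum>(p, v) \<leftarrow> ps. p) = 1 \<and>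
     \<rho> = (\<lambda>x y. \<Sum>(p, v) \<leftarrow> ps. complex_of_real p * v x * cnj (v y))"

definition op_mult :: "'a set \<Rightarrow> ('a \<Rightarrow> 'a \<Rightarrow> complex) \<Rightarrow> ('a \<Rightarrow> 'a \<Rightarrow> complex) \<Rightarrow> ('a \<Rightarrow> 'a \<Rightarrow> complex)" where
  "op_mult H A B = (\<lambda>x y. if x \<in> H \<and> y \<in> H then (\<Sum>z\<in>H. A x z * B z y) else 0)"

definition op_adj :: "('a \<Rightarrow> 'a \<Rightarrow> complex) \<Rightarrow> ('a \<Rightarrow> 'a \<Rightarrow> complex)" where
  "op_adj A = (\<lambda>x y. cnj (A y x))"

section \<open>Coherence (qudit C^d, incoherent basis |1>,...,|d> encoded as indices 0..d-1)\<close>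

definition coh_rank :: "nat \<Rightarrow> (nat \<Rightarrow> complex) \<Rightarrow> nat" where
  "coh_rank d \<psi> = card {i \<in> {..<d}. \<psi> i \<noteq> 0}"

definition coh_number :: "nat \<Rightarrow> (nat \<Rightarrow> nat \<Rightarrow> complex) \<Rightarrow> nat" where
  "coh_number d \<rho> = (INF ps \<in> {ps. pure_decomp {..<d} \<rho> ps}.
                        Max ((\<lambda>(p, v). coh_rank d v) ` set ps))"

text \<open>Parties are natural numbers in a finite set S; party p has local dimension dims p.
A basis configuration is a function assigning to each party p in S a local basis index
below dims p (and 0 to parties outside S).\<close>

definition configs :: "nat set \<Rightarrow> (nat \<Rightarrow> nat) \<Rightarrow> (nat \<Rightarrow> nat) set" where
  "configs S dims = {f. (\<forall>p\<in>S. f p < dims p) \<and> (\<forall>p. p \<notin> S \<longrightarrow> f p = 0)}"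

definition restr :: "(nat \<Rightarrow> nat) \<Rightarrow> nat set \<Rightarrow> (nat \<Rightarrow> nat)" where
  "restr f B = (\<lambda>p. if p \<in> B then f p else 0)"

definition k_producible_pure :: "nat set \<Rightarrow> (nat \<Rightarrow> nat) \<Rightarrow> nat \<Rightarrow> ((nat \<Rightarrow> nat) \<Rightarrow> complex) \<Rightarrow> bool" where
  "k_producible_pure S dims k \<psi> \<longleftrightarrow>
     (\<exists>P (\<phi> :: nat set \<Rightarrow> (nat \<Rightarrow> nat) \<Rightarrow> complex).
        partition_on S P \<and> (\<forall>B\<in>P. card B \<le> k) \<and>
        (\<forall>f \<in> configs S dims. \<psi> f = (\<Prod>B\<in>P. \<phi> B (restr f B))))"

definition k_producible :: "nat set \<Rightarrow> (nat \<Rightarrow> nat) \<Rightarrow> nat \<Rightarrow> ((nat \<Rightarrow> nat) \<Rightarrow> (nat \<Rightarrow> nat) \<Rightarrow> complex) \<Rightarrow> bool" where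
  "k_producible S dims k \<rho> \<longleftrightarrow>
     (\<exists>ps. pure_decomp (configs S dims) \<rho> ps \<and>
           (\<forall>(p, v) \<in> set ps. k_producible_pure S dims k v))"

definition ent_depth_is :: "nat set \<Rightarrow> (nat \<Rightarrow> nat) \<Rightarrow> ((nat \<Rightarrow> nat) \<Rightarrow> (nat \<Rightarrow> nat) \<Rightarrow> complex) \<Rightarrow> nat \<Rightarrow> bool" where
  "ent_depth_is S dims \<rho> k \<longleftrightarrow> k_producible S dims k \<rho> \<and> \<not> k_producible S dims (k - 1) \<rho>"

section \<open>The concrete system: party 0 = qudit (dim d), parties 1..d = qubits\<close>

definition qdims :: "nat \<Rightarrow> nat \<Rightarrow> nat" where
  "qdims d = (\<lambda>p. if p = 0 then d else 2)"

abbreviation Hfull :: "nat \<Rightarrow> (nat \<Rightarrow> nat) set" where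
  "Hfull d \<equiv> configs {0..d} (qdims d)"

abbreviation Hqubits :: "nat \<Rightarrow> (nat \<Rightarrow> nat) set" where
  "Hqubits d \<equiv> configs {1..d} (qdims d)"

definition ext_zero :: "nat \<Rightarrow> (nat \<Rightarrow> nat \<Rightarrow> complex) \<Rightarrow> ((nat \<Rightarrow> nat) \<Rightarrow> (nat \<Rightarrow> nat) \<Rightarrow> complex)" where
  "ext_zero d \<rho> = (\<lambda>f g. if f \<in> Hfull d \<and> g \<in> Hfull d \<and> (\<forall>p\<in>{1..d}. f p = 0 \<and> g p = 0)
                          then \<rho> (f 0) (g 0) else 0)"

definition lift_qudit :: "nat \<Rightarrow> (nat \<Rightarrow> nat \<Rightarrow> complex) \<Rightarrow> ((nat \<Rightarrow> nat) \<Rightarrow> (nat \<Rightarrow> nat) \<Rightarrow> complex)" where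
  "lift_qudit d A = (\<lambda>f g. if f \<in> Hfull d \<and> g \<in> Hfull d \<and> (\<forall>p\<in>{1..d}. f p = g p)
                             then A (f 0) (g 0) else 0)"

text \<open>U_A = sum_i |i><i| (x) sigma_x on the i-th qubit (qudit index i-1 in 0-based encoding,
i-th qubit = party i).\<close>
definition U_A :: "nat \<Rightarrow> ((nat \<Rightarrow> nat) \<Rightarrow> (nat \<Rightarrow> nat) \<Rightarrow> complex)" where
  "U_A d = (\<lambda>f g. if f \<in> Hfull d \<and> g \<in> Hfull d \<and> f 0 = g 0 \<and>
                      (\<forall>p\<in>{1..d}. f p = (if p = g 0 + 1 then 1 - g p else g p))
                   then 1 else 0)"

definition rho1 :: "nat \<Rightarrow> (nat \<Rightarrow> nat \<Rightarrow> complex) \<Rightarrow> ((nat \<Rightarrow> nat) \<Rightarrow> (nat \<Rightarrow> nat) \<Rightarrow> complex)" where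
  "rho1 d \<rho> = op_mult (Hfull d) (op_mult (Hfull d) (U_A d) (ext_zero d \<rho>)) (op_adj (U_A d))"

text \<open>Fourier unitary: F|j> = 1/sqrt d sum_m e^(2 pi i j m/d) |m>, with |j> (j = 1..d)
encoded as index j-1.\<close>
definition fourier :: "nat \<Rightarrow> nat \<Rightarrow> nat \<Rightarrow> complex" where
  "fourier d x y = (if x < d \<and> y < d then
      exp (2 * of_real pi * \<i> * of_nat ((y + 1) * (x + 1)) / of_nat d) / of_real (sqrt (real d))
    else 0)"

text \<open>|m><m| for m = 1..d (index m-1)\<close>
definition ketbra_q :: "nat \<Rightarrow> nat \<Rightarrow> nat \<Rightarrow> nat \<Rightarrow> complex" where
  "ketbra_q d m = (\<lambda>x y. if x = m - 1 \<and> y = m - 1 \<and> m - 1 < d then 1 else 0)"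

definition U_D :: "nat \<Rightarrow> nat \<Rightarrow> ((nat \<Rightarrow> nat) \<Rightarrow> (nat \<Rightarrow> nat) \<Rightarrow> complex)" where
  "U_D d m = (\<lambda>f g. if f \<in> Hqubits d \<and> f = g then
      (\<Prod>j\<in>{1..d}. if f j = 1 then exp (- 2 * of_real pi * \<i> * of_nat (j * m) / of_nat d) else 1)
    else 0)"

definition ptrace_qudit :: "nat \<Rightarrow> ((nat \<Rightarrow> nat) \<Rightarrow> (nat \<Rightarrow> nat) \<Rightarrow> complex) \<Rightarrow> ((nat \<Rightarrow> nat) \<Rightarrow> (nat \<Rightarrow> nat) \<Rightarrow> complex)" where
  "ptrace_qudit d X = (\<lambda>f g. if f \<in> Hqubits d \<and> g \<in> Hqubits d then
      (\<Sum>i<d. X (f(0 := i)) (g(0 := i))) else 0)"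

definition Delta :: "nat \<Rightarrow> ((nat \<Rightarrow> nat) \<Rightarrow> (nat \<Rightarrow> nat) \<Rightarrow> complex) \<Rightarrow> ((nat \<Rightarrow> nat) \<Rightarrow> (nat \<Rightarrow> nat) \<Rightarrow> complex)" where
  "Delta d X = (\<lambda>f g. \<Sum>m\<in>{1..d}.
      op_mult (Hqubits d)
        (op_mult (Hqubits d) (U_D d m)
          (ptrace_qudit d
            (op_mult (Hfull d)
              (op_mult (Hfull d) (lift_qudit d (ketbra_q d m))
                (op_mult (Hfull d) (lift_qudit d (fourier d)) X))
              (lift_qudit d (op_adj (fourier d))))))
        (op_adj (U_D d m)) f g)"

definition rho2 :: "nat \<Rightarrow> (nat \<Rightarrow> nat \<Rightarrow> complex) \<Rightarrow> ((nat \<Rightarrow> nat) \<Rightarrow> (nat \<Rightarrow> nat) \<Rightarrow> complex)" where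
  "rho2 d \<rho> = Delta d (rho1 d \<rho>)"

end

theory Submission
  imports Defs
begin

text \<open>
  Under \<open>U\<^sub>A\<close> the state \<open>\<rho>'\<close> is \<open>\<rho>\<close> carried by the isometry \<open>|i\<rangle> \<mapsto> |i\<rangle>|2\<^sup>d\<^sup>-\<^sup>i\<rangle>\<close>, and the
  measurement and phase corrections of \<open>\<Delta>\<close> make \<open>\<rho>''\<close> the image of \<open>\<rho>\<close> under
  \<open>|i\<rangle> \<mapsto> |2\<^sup>d\<^sup>-\<^sup>i\<rangle>\<close>. Every vector of a pure-state decomposition lies in the support of the
  state, so decompositions of \<open>\<rho>\<close>, \<open>\<rho>'\<close> and \<open>\<rho>''\<close> correspond to each other.

  If a product state is nonzero on two basis configurations, it is also nonzero on the
  configuration obtained by exchanging one block of parties between them. For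
  \<open>\<Sum> c\<^sub>i |i\<rangle>|2\<^sup>d\<^sup>-\<^sup>i\<rangle>\<close> this forces the qudit and all qubits flagged by the support of \<open>c\<close> into one
  block, and for \<open>\<Sum> c\<^sub>i |2\<^sup>d\<^sup>-\<^sup>i\<rangle>\<close> all those qubits; conversely that one block plus
  singletons is a valid factorisation. So these states are \<open>(r+1)\<close>- resp. \<open>r\<close>-producible exactly
  when the coherence rank of \<open>c\<close> is at most \<open>r\<close>, and all three conditions say that \<open>\<rho>\<close>
  decomposes into states of coherence rank at most \<open>k\<close> but not \<open>k - 1\<close>. That some
  decomposition exists, so that the coherence number is attained, follows from a Cholesky
  factorisation of \<open>\<rho>\<close>.
\<close>

section \<open>Product states\<close>

lemma finite_configs: "finite S \<Longrightarrow> finite (configs S dims)"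
proof -
  assume S: "finite S"
  have "configs S dims \<subseteq> (\<lambda>g p. if p \<in> S then g p else 0) ` PiE S (\<lambda>p. {..<dims p})"
  proof
    fix f assume f: "f \<in> configs S dims"
    then have "f = (\<lambda>p. if p \<in> S then restrict f S p else 0)" and "restrict f S \<in> PiE S (\<lambda>p. {..<dims p})"
      by (auto simp: configs_def)
    then show "f \<in> (\<lambda>g p. if p \<in> S then g p else 0) ` PiE S (\<lambda>p. {..<dims p})" by blast
  qed
  then show ?thesis using S by (auto intro: finite_subset simp: finite_PiE)
qed

lemma sum_over_inj_image:
  assumes "finite H" "inj_on t A" "t ` A \<subseteq> H" "\<And>z. z \<in> H \<Longrightarrow> z \<notin> t ` A \<Longrightarrow> G z = 0"
  shows "(\<Sum>z\<in>H. G z) = (\<Sum>i\<in>A. G (t i))"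
proof -
  have "(\<Sum>z\<in>H. G z) = (\<Sum>z\<in>t ` A. G z)"
    using assms by (intro sum.mono_neutral_right) auto
  also have "\<dots> = (\<Sum>i\<in>A. G (t i))" using assms(2) by (simp add: sum.reindex)
  finally show ?thesis .
qed

lemma product_state_block_exchange:
  fixes \<psi> :: "(nat \<Rightarrow> nat) \<Rightarrow> 'a::idom"
  assumes "finite S" "partition_on S P"
    and prod: "\<forall>f \<in> configs S dims. \<psi> f = (\<Prod>C\<in>P. \<phi> C (restr f C))"
    and B: "B \<in> P" and f: "f \<in> configs S dims" "\<psi> f \<noteq> 0" and g: "g \<in> configs S dims" "\<psi> g \<noteq> 0"
  shows "\<psi> (\<lambda>p. if p \<in> B then f p else g p) \<noteq> 0"
proof -
  define h where "h = (\<lambda>p. if p \<in> B then f p else g p)"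
  have "finite P" using assms(1,2) by (rule finite_elements)
  then have split: "\<psi> u = \<phi> B (restr u B) * (\<Prod>C\<in>P - {B}. \<phi> C (restr u C))"
    if "u \<in> configs S dims" for u
    using prod that B by (simp add: prod.remove)
  have "B \<subseteq> S" using assms(2) B by (auto simp: partition_on_def)
  then have h: "h \<in> configs S dims" using f g by (auto simp: configs_def h_def)
  have "restr h C = restr g C" if "C \<in> P - {B}" for C
    using assms(2) B that by (force simp: partition_on_def disjoint_def restr_def h_def)
  then have "(\<Prod>C\<in>P - {B}. \<phi> C (restr h C)) = (\<Prod>C\<in>P - {B}. \<phi> C (restr g C))"
    by (intro prod.cong) auto
  moreover have "restr h B = restr f B" by (auto simp: restr_def h_def)
  ultimately have "\<psi> h = \<phi> B (restr f B) * (\<Prod>C\<in>P - {B}. \<phi> C (restr g C))"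
    using split[OF h] by simp
  then show ?thesis using split[OF f(1)] split[OF g(1)] f(2) g(2) unfolding h_def by (simp add: mult_eq_0_iff)
qed

lemma k_producible_pure_if_concentrated:
  assumes "finite S" "B \<subseteq> S" "B \<noteq> {}" "card B \<le> k" "1 \<le> k"
    and vanish: "\<And>f p. f \<in> configs S dims \<Longrightarrow> p \<in> S - B \<Longrightarrow> f p \<noteq> 0 \<Longrightarrow> v f = 0"
  shows "k_producible_pure S dims k v"
proof -
  define P where "P = insert B ((\<lambda>p. {p}) ` (S - B))"
  define \<phi> where "\<phi> C g = (if C = B then v g else if g (the_elem C) = 0 then 1 else 0)" for C g
  have part: "partition_on S P"
    using assms(2,3) by (auto simp: P_def partition_on_def disjoint_def)
  have "v f = (\<Prod>C\<in>P. \<phi> C (restr f C))" if f: "f \<in> configs S dims" for f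
  proof -
    have "B \<notin> (\<lambda>p. {p}) ` (S - B)" using assms(3) by auto
    then have "(\<Prod>C\<in>P. \<phi> C (restr f C)) = v (restr f B) * (\<Prod>p\<in>S - B. \<phi> {p} (restr f {p}))"
      using assms(1) by (simp add: P_def \<phi>_def prod.reindex)
    also have "(\<Prod>p\<in>S - B. \<phi> {p} (restr f {p})) = (\<Prod>p\<in>S - B. if f p = 0 then 1 else 0)"
      using assms(3) by (intro prod.cong) (auto simp: \<phi>_def restr_def)
    finally have eq: "(\<Prod>C\<in>P. \<phi> C (restr f C)) = v (restr f B) * (\<Prod>p\<in>S - B. if f p = 0 then 1 else 0)" .
    show ?thesis
    proof (cases "\<forall>p\<in>S - B. f p = 0")
      case True
      then have "restr f B = f" using f by (force simp: restr_def configs_def)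
      then show ?thesis using eq True by simp
    next
      case False
      then show ?thesis using eq vanish[OF f] assms(1) by (auto simp: prod_zero_iff)
    qed
  qed
  moreover have "\<forall>B\<in>P. card B \<le> k" using assms(4,5) by (auto simp: P_def)
  ultimately show ?thesis unfolding k_producible_pure_def using part by blast
qed

text \<open>The witnesses rule out every block separating \<open>p\<close> from \<open>q\<close>, so all of \<open>Q\<close> lies in
  the block of \<open>q\<close>.\<close>

lemma k_producible_pure_card_le:
  assumes kp: "k_producible_pure S dims k \<psi>" and "finite S" "Q \<subseteq> S" "q \<in> Q"
    and witness: "\<And>p. p \<in> Q \<Longrightarrow> p \<noteq> q \<Longrightarrow> \<exists>f g. f \<in> configs S dims \<and> \<psi> f \<noteq> 0 \<and>
          g \<in> configs S dims \<and> \<psi> g \<noteq> 0 \<and> (\<forall>B. p \<in> B \<longrightarrow> q \<notin> B \<longrightarrow> \<psi> (\<lambda>x. if x \<in> B then f x else g x) = 0)"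
  shows "card Q \<le> k"
proof -
  obtain P \<phi> where part: "partition_on S P" and cards: "\<forall>B\<in>P. card B \<le> k"
    and prod: "\<forall>f \<in> configs S dims. \<psi> f = (\<Prod>C\<in>P. \<phi> C (restr f C))"
    using kp unfolding k_producible_pure_def by blast
  have block: "\<exists>B\<in>P. p \<in> B" if "p \<in> S" for p
    using part that by (auto simp: partition_on_def)
  have unique: "B = C" if "B \<in> P" "C \<in> P" "p \<in> B" "p \<in> C" for B C p
    using part that by (auto simp: partition_on_def disjoint_def)
  obtain B0 where B0: "B0 \<in> P" "q \<in> B0" using block assms(3,4) by blast
  have "Q \<subseteq> B0"
  proof
    fix p assume p: "p \<in> Q"
    obtain B where B: "B \<in> P" "p \<in> B" using block p assms(3) by blast
    show "p \<in> B0"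
    proof (cases "q \<in> B")
      case True then show ?thesis using unique[OF B(1) B0(1) _ B0(2)] B(2) by blast
    next
      case False
      then have "p \<noteq> q" using B(2) by blast
      then obtain f g where "f \<in> configs S dims" "\<psi> f \<noteq> 0" "g \<in> configs S dims" "\<psi> g \<noteq> 0"
        and "\<psi> (\<lambda>x. if x \<in> B then f x else g x) = 0"
        using witness[OF p] B(2) False by blast
      then show ?thesis using product_state_block_exchange[OF assms(2) part prod B(1)] by blast
    qed
  qed
  moreover have "finite B0" using B0(1) part assms(2) by (auto simp: partition_on_def intro: finite_subset)
  ultimately show ?thesis using cards B0(1) card_mono[of B0 Q] by fastforce
qed

section \<open>Pure-state decompositions along an embedding\<close>

definition lift_vec :: "(nat \<Rightarrow> 'b) \<Rightarrow> nat set \<Rightarrow> (nat \<Rightarrow> complex) \<Rightarrow> 'b \<Rightarrow> complex" where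
  "lift_vec t A c f = (\<Sum>i\<in>A. if f = t i then c i else 0)"

definition pull_vec :: "(nat \<Rightarrow> 'b) \<Rightarrow> nat set \<Rightarrow> ('b \<Rightarrow> complex) \<Rightarrow> nat \<Rightarrow> complex" where
  "pull_vec t A v i = (if i \<in> A then v (t i) else 0)"

lemma lift_vec_apply: "finite A \<Longrightarrow> inj_on t A \<Longrightarrow> i \<in> A \<Longrightarrow> lift_vec t A c (t i) = c i"
proof -
  assume "finite A" "inj_on t A" "i \<in> A"
  then have "lift_vec t A c (t i) = (\<Sum>j\<in>A. if i = j then c j else 0)"
    unfolding lift_vec_def by (intro sum.cong) (auto simp: inj_on_eq_iff)
  then show ?thesis using \<open>finite A\<close> \<open>i \<in> A\<close> by simp
qed

lemma lift_vec_outside: "f \<notin> t ` A \<Longrightarrow> lift_vec t A c f = 0"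
  unfolding lift_vec_def by (intro sum.neutral) auto

lemma lift_vec_nonzero_iff:
  "finite A \<Longrightarrow> inj_on t A \<Longrightarrow> lift_vec t A c f \<noteq> 0 \<longleftrightarrow> (\<exists>i\<in>A. c i \<noteq> 0 \<and> f = t i)"
  using lift_vec_outside[of f t A c] by (cases "f \<in> t ` A") (auto simp: lift_vec_apply)

lemma sum_list_pairs_cong:
  "(\<And>p v. (p, v) \<in> set ps \<Longrightarrow> F p v = G p v) \<Longrightarrow> (\<Sum>(p, v) \<leftarrow> ps. F p v) = (\<Sum>(p, v) \<leftarrow> ps. G p v)"
  by (induction ps) auto

lemma pure_decomp_lift:
  assumes "finite A" "finite H" and inj: "inj_on t A" and sub: "t ` A \<subseteq> H"
    and R_t: "\<And>a b. a \<in> A \<Longrightarrow> b \<in> A \<Longrightarrow> R (t a) (t b) = \<rho> a b"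
    and R_0: "\<And>f g. f \<notin> t ` A \<or> g \<notin> t ` A \<Longrightarrow> R f g = 0"
    and pd: "pure_decomp A \<rho> ps"
  shows "pure_decomp H R (map (\<lambda>(p, c). (p, lift_vec t A c)) ps)"
proof -
  have st: "is_state H (lift_vec t A c)" if "is_state A c" for c
  proof -
    have "(\<Sum>x\<in>H. (cmod (lift_vec t A c x))\<^sup>2) = (\<Sum>i\<in>A. (cmod (lift_vec t A c (t i)))\<^sup>2)"
      using assms(2) inj sub by (intro sum_over_inj_image) (auto simp: lift_vec_outside)
    also have "\<dots> = (\<Sum>i\<in>A. (cmod (c i))\<^sup>2)" using assms(1) inj by (simp add: lift_vec_apply)
    finally show ?thesis using that sub by (auto simp: is_state_def intro!: lift_vec_outside)
  qed
  have eq: "R f g = (\<Sum>(p, c) \<leftarrow> ps. complex_of_real p * lift_vec t A c f * cnj (lift_vec t A c g))" for f g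
  proof (cases "f \<in> t ` A \<and> g \<in> t ` A")
    case True
    then obtain a b where ab: "a \<in> A" "b \<in> A" "f = t a" "g = t b" by auto
    then have "R f g = (\<Sum>(p, c) \<leftarrow> ps. complex_of_real p * c a * cnj (c b))"
      using R_t pd by (simp add: pure_decomp_def)
    then show ?thesis using ab assms(1) inj by (simp add: lift_vec_apply)
  next
    case False
    then have "(\<Sum>(p, c) \<leftarrow> ps. complex_of_real p * lift_vec t A c f * cnj (lift_vec t A c g)) = (\<Sum>(p, c) \<leftarrow> ps. 0)"
      by (intro sum_list_pairs_cong) (auto simp: lift_vec_outside)
    then show ?thesis using R_0 False by (simp add: case_prod_unfold)
  qed
  show ?thesis
    using pd st by (auto simp: pure_decomp_def o_def case_prod_unfold eq[abs_def])
qed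

text \<open>\<open>R f f\<close> is the sum of the \<open>p |v f|\<^sup>2\<close> with all \<open>p > 0\<close>.\<close>

lemma pure_decomp_vanishes_off_support:
  assumes pd: "pure_decomp H R qs" and "(p, v) \<in> set qs" and "R f f = 0"
  shows "v f = 0"
proof -
  have "complex_of_real (\<Sum>(p, v) \<leftarrow> qs. p * (cmod (v f))\<^sup>2) = (\<Sum>(p, v) \<leftarrow> qs. complex_of_real p * v f * cnj (v f))"
    by (induction qs) (auto simp: mult.assoc complex_norm_square simp del: of_real_power)
  also have "\<dots> = 0" using pd assms(3) by (simp add: pure_decomp_def)
  finally have "(\<Sum>(p, v) \<leftarrow> qs. p * (cmod (v f))\<^sup>2) = 0" by simp
  then have "\<forall>x\<in>set (map (\<lambda>(p, v). p * (cmod (v f))\<^sup>2) qs). x = 0"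
    using pd by (subst sum_list_nonneg_eq_0_iff[symmetric]) (auto simp: pure_decomp_def)
  then have "p * (cmod (v f))\<^sup>2 = 0" using assms(2) by force
  moreover have "p > 0" using pd assms(2) by (auto simp: pure_decomp_def)
  ultimately show ?thesis by simp
qed

lemma pure_decomp_pull:
  assumes "finite A" "finite H" and inj: "inj_on t A" and sub: "t ` A \<subseteq> H"
    and R_t: "\<And>a b. a \<in> A \<Longrightarrow> b \<in> A \<Longrightarrow> R (t a) (t b) = \<rho> a b"
    and R_0: "\<And>f g. f \<notin> t ` A \<or> g \<notin> t ` A \<Longrightarrow> R f g = 0"
    and \<rho>_0: "\<And>a b. a \<notin> A \<or> b \<notin> A \<Longrightarrow> \<rho> a b = 0"
    and pd: "pure_decomp H R qs"
  shows "\<forall>(p, v) \<in> set qs. v = lift_vec t A (pull_vec t A v)"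
    and "pure_decomp A \<rho> (map (\<lambda>(p, v). (p, pull_vec t A v)) qs)"
proof -
  have vanish: "v f = 0" if "(p, v) \<in> set qs" "f \<notin> t ` A" for p v f
    using pure_decomp_vanishes_off_support[OF pd that(1)] R_0 that(2) by blast
  have "v = lift_vec t A (pull_vec t A v)" if "(p, v) \<in> set qs" for p v
  proof
    fix f show "v f = lift_vec t A (pull_vec t A v) f"
      using vanish[OF that] assms(1) inj
      by (cases "f \<in> t ` A") (auto simp: lift_vec_apply lift_vec_outside pull_vec_def)
  qed
  then show "\<forall>(p, v) \<in> set qs. v = lift_vec t A (pull_vec t A v)" by auto
  have st: "is_state A (pull_vec t A v)" if pv: "(p, v) \<in> set qs" for p v
  proof -
    have "(\<Sum>x\<in>H. (cmod (v x))\<^sup>2) = (\<Sum>i\<in>A. (cmod (v (t i)))\<^sup>2)"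
      using assms(2) inj sub vanish[OF pv] by (intro sum_over_inj_image) auto
    moreover have "(\<Sum>x\<in>H. (cmod (v x))\<^sup>2) = 1" using pd pv by (auto simp: pure_decomp_def is_state_def)
    ultimately show ?thesis by (simp add: is_state_def pull_vec_def)
  qed
  have eq: "\<rho> a b = (\<Sum>(p, v) \<leftarrow> qs. complex_of_real p * pull_vec t A v a * cnj (pull_vec t A v b))" for a b
  proof (cases "a \<in> A \<and> b \<in> A")
    case True
    then have "\<rho> a b = (\<Sum>(p, v) \<leftarrow> qs. complex_of_real p * v (t a) * cnj (v (t b)))"
      using R_t pd by (simp add: pure_decomp_def)
    then show ?thesis using True by (simp add: pull_vec_def)
  next
    case False
    then have "(\<Sum>(p, v) \<leftarrow> qs. complex_of_real p * pull_vec t A v a * cnj (pull_vec t A v b)) = (\<Sum>(p, v) \<leftarrow> qs. 0)"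
      by (intro sum_list_pairs_cong) (auto simp: pull_vec_def)
    then show ?thesis using \<rho>_0 False by (simp add: case_prod_unfold)
  qed
  show "pure_decomp A \<rho> (map (\<lambda>(p, v). (p, pull_vec t A v)) qs)"
    using pd st by (auto simp: pure_decomp_def o_def case_prod_unfold eq[abs_def])
qed

section \<open>Gram decomposition of positive semidefinite matrices\<close>

definition qform :: "nat \<Rightarrow> (nat \<Rightarrow> nat \<Rightarrow> complex) \<Rightarrow> (nat \<Rightarrow> complex) \<Rightarrow> complex" where
  "qform n A v = (\<Sum>x<n. cnj (v x) * (\<Sum>y<n. A x y * v y))"

definition psd :: "nat \<Rightarrow> (nat \<Rightarrow> nat \<Rightarrow> complex) \<Rightarrow> bool" where
  "psd n A \<longleftrightarrow> (\<forall>v. Im (qform n A v) = 0 \<and> Re (qform n A v) \<ge> 0)"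

lemma qform_unit: "y < n \<Longrightarrow> qform n A (\<lambda>x. of_bool (x = y)) = A y y"
proof -
  have "cnj (of_bool b) = of_bool b" for b by (cases b) simp_all
  then show "y < n \<Longrightarrow> ?thesis" by (simp add: qform_def)
qed

lemma sum_update:
  fixes f :: "nat \<Rightarrow> complex"
  assumes "a < n"
  shows "(\<Sum>y<n. f y * (if y = a then v y + g else v y)) = (\<Sum>y<n. f y * v y) + f a * g"
proof -
  have "(\<Sum>y<n. f y * (if y = a then v y + g else v y)) = (\<Sum>y<n. f y * v y + (if y = a then f a * g else 0))"
    by (intro sum.cong) (auto simp: algebra_simps)
  then show ?thesis using assms by (simp add: sum.distrib)
qed

lemma qform_update:
  assumes a: "a < n" and herm: "\<And>x y. A y x = cnj (A x y)"
  shows "qform n A (\<lambda>x. if x = a then v x + \<gamma> else v x) =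
     qform n A v + \<gamma> * cnj (\<Sum>y<n. A a y * v y) + cnj \<gamma> * (\<Sum>y<n. A a y * v y) + cnj \<gamma> * \<gamma> * A a a"
proof -
  define r where "r x = (\<Sum>y<n. A x y * v y)" for x
  have sum_update_left: "(\<Sum>y<n. (if y = a then u y + g else u y) * f y) = (\<Sum>y<n. u y * f y) + g * f a"
    for u f :: "nat \<Rightarrow> complex" and g
    using sum_update[OF a, of f u g] by (simp add: mult.commute)
  have "qform n A (\<lambda>x. if x = a then v x + \<gamma> else v x) =
      (\<Sum>x<n. (if x = a then cnj (v x) + cnj \<gamma> else cnj (v x)) * (r x + A x a * \<gamma>))"
    unfolding qform_def r_def sum_update[OF a] by (simp add: if_distrib[of cnj] cong: if_cong)
  also have "\<dots> = (\<Sum>x<n. (if x = a then cnj (v x) + cnj \<gamma> else cnj (v x)) * r x)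
        + (\<Sum>x<n. (if x = a then cnj (v x) + cnj \<gamma> else cnj (v x)) * A x a) * \<gamma>"
    by (simp add: distrib_left sum.distrib sum_distrib_right mult.assoc)
  also have "(\<Sum>x<n. (if x = a then cnj (v x) + cnj \<gamma> else cnj (v x)) * r x) = qform n A v + cnj \<gamma> * r a"
    unfolding qform_def r_def by (rule sum_update_left)
  also have "(\<Sum>x<n. (if x = a then cnj (v x) + cnj \<gamma> else cnj (v x)) * A x a) =
      (\<Sum>x<n. cnj (v x) * A x a) + cnj \<gamma> * A a a"
    by (rule sum_update_left)
  also have "(\<Sum>x<n. cnj (v x) * A x a) = cnj (r a)"
    unfolding r_def cnj_sum by (intro sum.cong refl) (simp add: herm[of a] mult.commute)
  finally show ?thesis unfolding r_def by (simp add: algebra_simps)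
qed

lemma qform_Suc_eq:
  assumes "\<forall>y. A n y = 0" "\<forall>x. A x n = 0"
  shows "qform (Suc n) A v = qform n A v"
  unfolding qform_def lessThan_Suc using assms by simp

lemma qform_diff_rank_one:
  "qform n (\<lambda>x y. A x y - w x * cnj (w y)) v =
     qform n A v - (\<Sum>x<n. cnj (v x) * w x) * (\<Sum>y<n. cnj (w y) * v y)"
proof -
  define C where "C = (\<Sum>y<n. cnj (w y) * v y)"
  have inner: "(\<Sum>y<n. (A x y - w x * cnj (w y)) * v y) = (\<Sum>y<n. A x y * v y) - w x * C" for x
    unfolding C_def by (simp add: algebra_simps sum_subtractf sum_distrib_left)
  have "qform n (\<lambda>x y. A x y - w x * cnj (w y)) v = (\<Sum>x<n. cnj (v x) * (\<Sum>y<n. A x y * v y) - cnj (v x) * w x * C)"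
    unfolding qform_def inner by (simp add: algebra_simps)
  also have "\<dots> = qform n A v - (\<Sum>x<n. cnj (v x) * w x) * C"
    unfolding qform_def by (simp add: sum_subtractf sum_distrib_right)
  finally show ?thesis unfolding C_def .
qed

text \<open>If \<open>A\<^sub>y\<^sub>n \<noteq> 0\<close> while \<open>A\<^sub>n\<^sub>n = 0\<close>, moving \<open>e\<^sub>y\<close> by a large multiple of
  \<open>-A\<^sub>n\<^sub>y e\<^sub>n\<close> makes the quadratic form negative.\<close>

lemma psd_zero_diag_imp_zero_row:
  assumes herm: "\<And>x y. A y x = cnj (A x y)" and "psd (Suc n) A" "A n n = 0" "y < Suc n"
  shows "A n y = 0"
proof (rule ccontr)
  assume nz: "A n y \<noteq> 0"
  define v :: "nat \<Rightarrow> complex" where "v x = of_bool (x = y)" for x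
  define t where "t = (Re (A y y) + 1) / (2 * (cmod (A n y))\<^sup>2)"
  define \<gamma> where "\<gamma> = - of_real t * A n y"
  have row: "(\<Sum>z<Suc n. A n z * v z) = A n y" using assms(4) by (simp add: v_def)
  have "qform (Suc n) A v = A y y" unfolding v_def using assms(4) by (rule qform_unit)
  moreover have "qform (Suc n) A (\<lambda>x. if x = n then v x + \<gamma> else v x) =
      qform (Suc n) A v + \<gamma> * cnj (A n y) + cnj \<gamma> * A n y + cnj \<gamma> * \<gamma> * A n n"
    using qform_update[where a=n and n="Suc n" and A=A and v=v and \<gamma>=\<gamma>, OF lessI herm] by (simp only: row)
  ultimately have "qform (Suc n) A (\<lambda>x. if x = n then v x + \<gamma> else v x) = A y y + \<gamma> * cnj (A n y) + cnj \<gamma> * A n y"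
    using assms(3) by simp
  also have "\<dots> = A y y - of_real (2 * t * (cmod (A n y))\<^sup>2)"
    unfolding \<gamma>_def by (simp add: complex_norm_square[symmetric] algebra_simps del: of_real_power)
  finally have "Re (qform (Suc n) A (\<lambda>x. if x = n then v x + \<gamma> else v x)) = Re (A y y) - 2 * t * (cmod (A n y))\<^sup>2"
    by simp
  also have "\<dots> = - 1" using nz by (simp add: t_def field_simps)
  finally have "Re (qform (Suc n) A (\<lambda>x. if x = n then v x + \<gamma> else v x)) = - 1" .
  then show False using assms(2) unfolding psd_def by (metis neg_0_le_iff_le not_one_le_zero)
qed

text \<open>The Schur complement step of a Cholesky factorisation: the form of \<open>A - w w\<^sup>*\<close> at \<open>v\<close>
  is the form of \<open>A\<close> at \<open>v - (\<Sum>\<^sub>y A\<^sub>n\<^sub>y v\<^sub>y / A\<^sub>n\<^sub>n) e\<^sub>n\<close>.\<close>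

lemma psd_subtract_column:
  assumes herm: "\<And>x y. A y x = cnj (A x y)" and psd: "psd (Suc n) A"
    and Ann: "A n n = of_real r" and r: "r > 0" and w: "\<And>x. w x = A x n / of_real (sqrt r)"
  shows "psd (Suc n) (\<lambda>x y. A x y - w x * cnj (w y))"
  unfolding psd_def
proof
  fix v
  define s where "s = complex_of_real (sqrt r)"
  have ss: "s * s = of_real r" and s0: "s \<noteq> 0" and cs: "cnj s = s"
    using r by (simp_all add: s_def flip: of_real_mult)
  define \<beta> where "\<beta> = (\<Sum>y<Suc n. A n y * v y)"
  have cw: "cnj (w y) = A n y / s" for y unfolding w s_def[symmetric] using herm[of y n] cs by simp
  have c1: "(\<Sum>y<Suc n. cnj (w y) * v y) = \<beta> / s"
    unfolding cw \<beta>_def by (simp add: sum_divide_distrib del: sum.lessThan_Suc)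
  have c2: "(\<Sum>x<Suc n. cnj (v x) * w x) = cnj (\<beta> / s)"
    unfolding c1[symmetric] by (simp add: cnj_sum mult.commute del: sum.lessThan_Suc)
  have "qform (Suc n) (\<lambda>x y. A x y - w x * cnj (w y)) v = qform (Suc n) A v - cnj \<beta> * \<beta> / of_real r"
    unfolding qform_diff_rank_one c1 c2 using s0 cs ss by (simp add: field_simps)
  also have "\<dots> = qform (Suc n) A (\<lambda>x. if x = n then v x + - \<beta> / of_real r else v x)"
    unfolding qform_update[where a=n and n="Suc n" and A=A and v=v, OF lessI herm]
    unfolding \<beta>_def[symmetric] Ann using r by (simp add: field_simps)
  finally show "Im (qform (Suc n) (\<lambda>x y. A x y - w x * cnj (w y)) v) = 0 \<and>
      Re (qform (Suc n) (\<lambda>x y. A x y - w x * cnj (w y)) v) \<ge> 0"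
    using psd by (simp add: psd_def)
qed

lemma psd_deflate:
  assumes supp: "\<forall>x y. Suc n \<le> x \<or> Suc n \<le> y \<longrightarrow> A x y = 0" and herm: "\<And>x y. A y x = cnj (A x y)"
    and psd: "psd (Suc n) A" and nz: "A n n \<noteq> 0"
  obtains w where "\<forall>x. Suc n \<le> x \<longrightarrow> w x = 0"
    and "\<forall>x y. n \<le> x \<or> n \<le> y \<longrightarrow> A x y - w x * cnj (w y) = 0"
    and "psd n (\<lambda>x y. A x y - w x * cnj (w y))"
proof -
  define r where "r = Re (A n n)"
  have "Im (A n n) = 0" using herm[of n n] by (metis cnj.simps(2) complex.sel(2) neg_equal_zero)
  then have Ann: "A n n = of_real r" by (simp add: r_def complex_eq_iff)
  have "r \<ge> 0" using psd qform_unit[OF lessI, of n A] unfolding psd_def r_def by metis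
  then have r: "r > 0" using nz Ann by fastforce
  define w where "w x = A x n / of_real (sqrt r)" for x
  define \<sigma> where "\<sigma> x y = A x y - w x * cnj (w y)" for x y
  have w0: "\<forall>x. Suc n \<le> x \<longrightarrow> w x = 0" using supp by (simp add: w_def)
  have row: "\<sigma> n y = 0" for y
    using herm[of y n] Ann r by (simp add: \<sigma>_def w_def field_simps flip: of_real_mult)
  have "\<sigma> y x = cnj (\<sigma> x y)" for x y
    unfolding \<sigma>_def using herm[of x y] by (simp add: mult.commute)
  then have col: "\<sigma> x n = 0" for x using row by (metis complex_cnj_zero)
  have "\<forall>x y. n \<le> x \<or> n \<le> y \<longrightarrow> \<sigma> x y = 0"
  proof (intro allI impI)
    fix x y assume "n \<le> x \<or> n \<le> y"
    then consider "x = n" | "y = n" | "Suc n \<le> x" | "Suc n \<le> y" by linarith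
    then show "\<sigma> x y = 0" by cases (use row col supp w0 in \<open>auto simp: \<sigma>_def\<close>)
  qed
  moreover have "psd n \<sigma>"
  proof -
    have "psd (Suc n) \<sigma>" unfolding \<sigma>_def by (rule psd_subtract_column[OF herm psd Ann r]) (simp add: w_def)
    moreover have "qform (Suc n) \<sigma> v = qform n \<sigma> v" for v using row col by (intro qform_Suc_eq) auto
    ultimately show ?thesis by (simp add: psd_def)
  qed
  ultimately show ?thesis using that w0 unfolding \<sigma>_def by blast
qed

lemma psd_gram:
  assumes "\<forall>x y. n \<le> x \<or> n \<le> y \<longrightarrow> A x y = 0" "\<And>x y. A y x = cnj (A x y)" "psd n A"
  shows "\<exists>ws. (\<forall>w\<in>set ws. \<forall>x. n \<le> x \<longrightarrow> w x = 0) \<and> A = (\<lambda>x y. \<Sum>w\<leftarrow>ws. w x * cnj (w y))"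
  using assms
proof (induction n arbitrary: A)
  case 0
  show ?case using "0.prems"(1) by (intro exI[of _ "[]"]) auto
next
  case (Suc n)
  show ?case
  proof (cases "A n n = 0")
    case True
    have row: "A n y = 0" for y
      using psd_zero_diag_imp_zero_row[OF Suc.prems(2,3) True, of y] Suc.prems(1) by (cases "y < Suc n") auto
    have col: "A x n = 0" for x using row[of x] Suc.prems(2)[of n x] by simp
    have "\<forall>x y. n \<le> x \<or> n \<le> y \<longrightarrow> A x y = 0"
      using Suc.prems(1) row col by (metis le_neq_implies_less Suc_leI)
    moreover have "psd n A" using Suc.prems(3) qform_Suc_eq[of A n] row col by (simp add: psd_def)
    ultimately obtain ws where "\<forall>w\<in>set ws. \<forall>x. n \<le> x \<longrightarrow> w x = 0" "A = (\<lambda>x y. \<Sum>w\<leftarrow>ws. w x * cnj (w y))"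
      using Suc.IH Suc.prems(2) by blast
    then show ?thesis by (intro exI[of _ ws]) auto
  next
    case False
    obtain w where w: "\<forall>x. Suc n \<le> x \<longrightarrow> w x = 0"
      and supp: "\<forall>x y. n \<le> x \<or> n \<le> y \<longrightarrow> A x y - w x * cnj (w y) = 0"
      and psd: "psd n (\<lambda>x y. A x y - w x * cnj (w y))"
      using psd_deflate[OF Suc.prems False] by blast
    have "(\<lambda>x y. A x y - w x * cnj (w y)) y x = cnj (A x y - w x * cnj (w y))" for x y
      using Suc.prems(2)[of x y] by (simp add: mult.commute)
    then obtain ws where ws: "\<forall>v\<in>set ws. \<forall>x. n \<le> x \<longrightarrow> v x = 0"
      and eq: "(\<lambda>x y. A x y - w x * cnj (w y)) = (\<lambda>x y. \<Sum>v\<leftarrow>ws. v x * cnj (v y))"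
      using Suc.IH[OF supp _ psd] by blast
    have "A = (\<lambda>x y. \<Sum>v\<leftarrow>w # ws. v x * cnj (v y))"
      using eq by (simp add: fun_eq_iff) (metis diff_eq_eq add.commute)
    then show ?thesis using ws w by (intro exI[of _ "w # ws"]) auto
  qed
qed

lemma density_op_gram:
  fixes \<rho> :: "nat \<Rightarrow> nat \<Rightarrow> complex"
  assumes "density_op {..<d} \<rho>"
  obtains ws where "\<forall>w\<in>set ws. \<forall>x. d \<le> x \<longrightarrow> w x = 0" and "\<rho> = (\<lambda>x y. \<Sum>w\<leftarrow>ws. w x * cnj (w y))"
proof -
  have D: "\<forall>x y. x \<notin> {..<d} \<or> y \<notin> {..<d} \<longrightarrow> \<rho> x y = 0"
      "\<forall>x\<in>{..<d}. \<forall>y\<in>{..<d}. \<rho> y x = cnj (\<rho> x y)"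
      "\<forall>v. Im (\<Sum>x<d. \<Sum>y<d. cnj (v x) * \<rho> x y * v y) = 0 \<and> Re (\<Sum>x<d. \<Sum>y<d. cnj (v x) * \<rho> x y * v y) \<ge> 0"
    using assms unfolding density_op_def by blast+
  have supp: "\<forall>x y. d \<le> x \<or> d \<le> y \<longrightarrow> \<rho> x y = 0"
    using D(1) by (simp add: not_less)
  have herm: "\<rho> y x = cnj (\<rho> x y)" for x y
  proof (cases "x < d \<and> y < d")
    case True then show ?thesis using D(2) by (meson lessThan_iff)
  next
    case False then show ?thesis using supp by (metis complex_cnj_zero not_le)
  qed
  have "(\<Sum>x<d. \<Sum>y<d. cnj (v x) * \<rho> x y * v y) = qform d \<rho> v" for v
    by (simp add: qform_def sum_distrib_left mult.assoc)
  then have "psd d \<rho>" using D(3) by (simp add: psd_def)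
  then show ?thesis using psd_gram[OF supp herm] that by blast
qed

lemma pure_decomp_of_gram:
  fixes \<rho> :: "nat \<Rightarrow> nat \<Rightarrow> complex"
  assumes supp: "\<forall>w\<in>set ws. \<forall>x. d \<le> x \<longrightarrow> w x = 0"
    and \<rho>: "\<rho> = (\<lambda>x y. \<Sum>w\<leftarrow>ws. w x * cnj (w y))" and tr: "(\<Sum>x<d. \<rho> x x) = 1"
  shows "\<exists>ps. pure_decomp {..<d} \<rho> ps"
proof -
  define N where "N w = (\<Sum>x<d. (cmod (w x))\<^sup>2)" for w :: "nat \<Rightarrow> complex"
  define v where "v w x = w x / of_real (sqrt (N w))" for w :: "nat \<Rightarrow> complex" and x
  have N_pos: "N w > 0" if "N w \<noteq> 0" for w using that by (simp add: N_def order_less_le sum_nonneg)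
  have zero: "w x = 0" if "w \<in> set ws" "N w = 0" for w x
    using that supp by (cases "x < d") (auto simp: N_def sum_nonneg_eq_0_iff)
  have state: "is_state {..<d} (v w)" if "w \<in> set ws" "N w \<noteq> 0" for w
  proof -
    have "(\<Sum>x<d. (cmod (v w x))\<^sup>2) = (\<Sum>x<d. (cmod (w x))\<^sup>2 / N w)"
      using N_pos[OF that(2)] by (simp add: v_def norm_divide power_divide)
    also have "\<dots> = 1" using that(2) by (simp add: N_def sum_divide_distrib[symmetric])
    finally show ?thesis using that(1) supp by (auto simp: is_state_def v_def)
  qed
  have rank_one: "complex_of_real (N w) * v w x * cnj (v w y) = w x * cnj (w y)" if "N w \<noteq> 0" for w x y
  proof -
    have "complex_of_real (sqrt (N w)) * complex_of_real (sqrt (N w)) = complex_of_real (N w)"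
      using N_pos[OF that] by (simp flip: of_real_mult)
    then show ?thesis using N_pos[OF that] by (simp add: v_def field_simps)
  qed
  define ps where "ps = map (\<lambda>w. (N w, v w)) (filter (\<lambda>w. N w \<noteq> 0) ws)"
  have diag: "\<rho> x x = complex_of_real (\<Sum>w\<leftarrow>ws. (cmod (w x))\<^sup>2)" for x
    unfolding \<rho> by (induction ws) (auto simp flip: complex_norm_square)
  have "(\<Sum>(p, v) \<leftarrow> ps. p) = (\<Sum>w\<leftarrow>ws. N w)"
    unfolding ps_def by (induction ws) auto
  also have "\<dots> = (\<Sum>x<d. \<Sum>w\<leftarrow>ws. (cmod (w x))\<^sup>2)"
    unfolding N_def by (induction ws) (auto simp: sum.distrib)
  also have "\<dots> = 1" using tr by (simp add: diag flip: of_real_sum)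
  finally have weights: "(\<Sum>(p, v) \<leftarrow> ps. p) = 1" .
  have "\<rho> x y = (\<Sum>(p, v) \<leftarrow> ps. complex_of_real p * v x * cnj (v y))" for x y
    unfolding \<rho> ps_def using zero rank_one by (induction ws) auto
  then have "pure_decomp {..<d} \<rho> ps"
    using N_pos state weights by (auto simp: pure_decomp_def ps_def)
  then show ?thesis ..
qed

lemma density_op_pure_decomp_exists:
  fixes \<rho> :: "nat \<Rightarrow> nat \<Rightarrow> complex"
  shows "density_op {..<d} \<rho> \<Longrightarrow> \<exists>ps. pure_decomp {..<d} \<rho> ps"
proof -
  assume dens: "density_op {..<d} \<rho>"
  then have "(\<Sum>x<d. \<rho> x x) = 1" unfolding density_op_def by blast
  moreover obtain ws where "\<forall>w\<in>set ws. \<forall>x. d \<le> x \<longrightarrow> w x = 0" "\<rho> = (\<lambda>x y. \<Sum>w\<leftarrow>ws. w x * cnj (w y))"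
    using density_op_gram[OF dens] .
  ultimately show ?thesis using pure_decomp_of_gram by blast
qed

section \<open>Coherent superpositions of flagged configurations\<close>

text \<open>With the qudit as party 0 and the qubits as parties \<open>1..d\<close>, \<open>flagged i\<close> is the basis
  configuration \<open>|i\<rangle>|2\<^sup>d\<^sup>-\<^sup>i\<rangle>\<close> of \<open>U\<^sub>A\<close>'s image, \<open>flag i\<close> its qubit part and \<open>unflagged i\<close>
  the configuration \<open>|i\<rangle>|0\<rangle>\<^sup>\<otimes>\<^sup>d\<close> (qudit indices are 0-based).\<close>

definition flagged :: "nat \<Rightarrow> nat \<Rightarrow> nat" where
  "flagged i p = (if p = 0 then i else if p = Suc i then 1 else 0)"

definition flag :: "nat \<Rightarrow> nat \<Rightarrow> nat" where
  "flag i p = (if p = Suc i then 1 else 0)"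

definition unflagged :: "nat \<Rightarrow> nat \<Rightarrow> nat" where
  "unflagged i p = (if p = 0 then i else 0)"

lemma flagged_eq_iff [simp]: "flagged i = flagged j \<longleftrightarrow> i = j"
  by (metis flagged_def)

lemma flag_eq_iff [simp]: "flag i = flag j \<longleftrightarrow> i = j"
  by (metis flag_def nat.inject zero_neq_one)

lemma unflagged_eq_iff [simp]: "unflagged i = unflagged j \<longleftrightarrow> i = j"
  by (metis unflagged_def)

lemma inj_flagged: "inj_on flagged A"
  by (simp add: inj_on_def)

lemma inj_flag: "inj_on flag A"
  by (simp add: inj_on_def)

lemma inj_unflagged: "inj_on unflagged A"
  by (simp add: inj_on_def)

lemma flagged_in_Hfull: "i < d \<Longrightarrow> flagged i \<in> Hfull d"
  by (auto simp: configs_def qdims_def flagged_def)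

lemma flag_in_Hqubits: "i < d \<Longrightarrow> flag i \<in> Hqubits d"
  by (auto simp: configs_def qdims_def flag_def)

lemma unflagged_in_Hfull: "i < d \<Longrightarrow> unflagged i \<in> Hfull d"
  by (auto simp: configs_def qdims_def unflagged_def)

lemma coh_rank_le_imp_k_producible_lift_flagged:
  assumes "coh_rank d c \<le> j - 1" "2 \<le> j"
  shows "k_producible_pure {0..d} (qdims d) j (lift_vec flagged {..<d} c)"
proof -
  define I where "I = {i\<in>{..<d}. c i \<noteq> 0}"
  have "card (insert 0 (Suc ` I)) = card I + 1" by (simp add: I_def card_image)
  then show ?thesis
    using assms unfolding coh_rank_def I_def[symmetric]
  proof (intro k_producible_pure_if_concentrated[where B = "insert 0 (Suc ` I)"])
    fix f :: "nat \<Rightarrow> nat" and p assume "p \<in> {0..d} - insert 0 (Suc ` I)" "f p \<noteq> 0"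
    then show "lift_vec flagged {..<d} c f = 0"
      using lift_vec_nonzero_iff[of "{..<d}" flagged c f] inj_flagged by (auto simp: I_def flagged_def split: if_splits)
  qed (auto simp: I_def)
qed

lemma coh_rank_le_imp_k_producible_lift_flag:
  assumes "coh_rank d c \<le> j" "1 \<le> j" "i0 < d" "c i0 \<noteq> 0"
  shows "k_producible_pure {1..d} (qdims d) j (lift_vec flag {..<d} c)"
proof -
  define I where "I = {i\<in>{..<d}. c i \<noteq> 0}"
  have "card (Suc ` I) = card I" by (simp add: card_image)
  then show ?thesis
    using assms unfolding coh_rank_def I_def[symmetric]
  proof (intro k_producible_pure_if_concentrated[where B = "Suc ` I"])
    fix f :: "nat \<Rightarrow> nat" and p assume "p \<in> {1..d} - Suc ` I" "f p \<noteq> 0"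
    then show "lift_vec flag {..<d} c f = 0"
      using lift_vec_nonzero_iff[of "{..<d}" flag c f] inj_flag by (auto simp: I_def flag_def split: if_splits)
  qed (auto simp: I_def)
qed

lemma k_producible_lift_flagged_iff:
  assumes "2 \<le> j"
  shows "k_producible_pure {0..d} (qdims d) j (lift_vec flagged {..<d} c) \<longleftrightarrow> coh_rank d c \<le> j - 1"
proof
  assume kp: "k_producible_pure {0..d} (qdims d) j (lift_vec flagged {..<d} c)"
  define I where "I = {i\<in>{..<d}. c i \<noteq> 0}"
  have lift_flagged: "lift_vec flagged {..<d} c (flagged i) = c i" if "i < d" for i
    using that by (simp add: lift_vec_apply inj_flagged)
  show "coh_rank d c \<le> j - 1"
  proof (cases "card I \<le> 1")
    case False
    have "card (insert 0 (Suc ` I)) \<le> j"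
    proof (rule k_producible_pure_card_le[OF kp])
      fix p assume "p \<in> insert 0 (Suc ` I)" "p \<noteq> 0"
      then obtain i where i: "i \<in> I" "p = Suc i" by blast
      have "\<not> I \<subseteq> {i}" using False card_mono[of "{i}" I] by force
      then obtain i' where i': "i' \<in> I" "i' \<noteq> i" by blast
      txt \<open>The exchange takes the flag qubit from \<open>|i\<rangle>\<close> and the qudit from \<open>|i'\<rangle>\<close>.\<close>
      have "lift_vec flagged {..<d} c h = 0" if "p \<in> B" "0 \<notin> B"
        and h: "h = (\<lambda>x. if x \<in> B then flagged i x else flagged i' x)" for B h
      proof -
        have "h 0 = i'" "h (Suc i) = 1" using that i(2) by (simp_all add: flagged_def)
        then have "h \<noteq> flagged a" for a using i'(2) by (auto simp: flagged_def)
        then show ?thesis using lift_vec_nonzero_iff[of "{..<d}" flagged c h] inj_flagged by auto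
      qed
      moreover have "flagged i \<in> Hfull d" "flagged i' \<in> Hfull d"
        using flagged_in_Hfull i(1) i'(1) unfolding I_def by blast+
      moreover have "lift_vec flagged {..<d} c (flagged i) \<noteq> 0" "lift_vec flagged {..<d} c (flagged i') \<noteq> 0"
        using i i' by (auto simp: I_def lift_flagged)
      ultimately show "\<exists>f g. f \<in> Hfull d \<and> lift_vec flagged {..<d} c f \<noteq> 0 \<and> g \<in> Hfull d \<and>
          lift_vec flagged {..<d} c g \<noteq> 0 \<and>
          (\<forall>B. p \<in> B \<longrightarrow> 0 \<notin> B \<longrightarrow> lift_vec flagged {..<d} c (\<lambda>x. if x \<in> B then f x else g x) = 0)"
        by blast
    qed (auto simp: I_def)
    moreover have "finite I" by (simp add: I_def)
    ultimately show ?thesis unfolding coh_rank_def I_def[symmetric] by (simp add: card_image)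
  qed (use assms in \<open>simp add: coh_rank_def I_def\<close>)
qed (use assms coh_rank_le_imp_k_producible_lift_flagged in blast)

lemma k_producible_lift_flag_iff:
  assumes "1 \<le> j" "i0 < d" "c i0 \<noteq> 0"
  shows "k_producible_pure {1..d} (qdims d) j (lift_vec flag {..<d} c) \<longleftrightarrow> coh_rank d c \<le> j"
proof
  assume kp: "k_producible_pure {1..d} (qdims d) j (lift_vec flag {..<d} c)"
  define I where "I = {i\<in>{..<d}. c i \<noteq> 0}"
  have lift_flag: "lift_vec flag {..<d} c (flag i) = c i" if "i < d" for i
    using that by (simp add: lift_vec_apply inj_flag)
  have "card (Suc ` I) \<le> j"
  proof (rule k_producible_pure_card_le[OF kp, where q = "Suc i0"])
    fix p assume "p \<in> Suc ` I" "p \<noteq> Suc i0"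
    then obtain i where i: "i \<in> I" "p = Suc i" "i \<noteq> i0" by blast
    txt \<open>The exchange carries the flags of both \<open>|i\<rangle>\<close> and \<open>|i\<^sub>0\<rangle>\<close>.\<close>
    have "lift_vec flag {..<d} c h = 0" if "p \<in> B" "Suc i0 \<notin> B"
      and h: "h = (\<lambda>x. if x \<in> B then flag i x else flag i0 x)" for B h
    proof -
      have "h (Suc i) = 1" "h (Suc i0) = 1" using that i(2) by (simp_all add: flag_def)
      then have "h \<noteq> flag a" for a using i(3) unfolding flag_def by (metis nat.inject zero_neq_one)
      then show ?thesis using lift_vec_nonzero_iff[of "{..<d}" flag c h] inj_flag by auto
    qed
    moreover have "flag i \<in> Hqubits d" "flag i0 \<in> Hqubits d"
      using flag_in_Hqubits i(1) assms(2) unfolding I_def by blast+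
    moreover have "lift_vec flag {..<d} c (flag i) \<noteq> 0" "lift_vec flag {..<d} c (flag i0) \<noteq> 0"
      using i assms(2,3) by (auto simp: I_def lift_flag)
    ultimately show "\<exists>f g. f \<in> Hqubits d \<and> lift_vec flag {..<d} c f \<noteq> 0 \<and> g \<in> Hqubits d \<and>
        lift_vec flag {..<d} c g \<noteq> 0 \<and>
        (\<forall>B. p \<in> B \<longrightarrow> Suc i0 \<notin> B \<longrightarrow> lift_vec flag {..<d} c (\<lambda>x. if x \<in> B then f x else g x) = 0)"
      by blast
  qed (use assms in \<open>auto simp: I_def\<close>)
  then show "coh_rank d c \<le> j" unfolding coh_rank_def I_def[symmetric] by (simp add: card_image)
qed (use assms coh_rank_le_imp_k_producible_lift_flag in blast)

section \<open>The activated state\<close>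

lemma op_mult_op_adj_embedded:
  assumes "finite H" "inj_on t A" "t ` A \<subseteq> H"
    and E_0: "\<And>z w. z \<notin> t ` A \<or> w \<notin> t ` A \<Longrightarrow> E z w = 0"
    and "f \<in> H" "g \<in> H"
  shows "op_mult H (op_mult H U E) (op_adj U) f g =
    (\<Sum>i\<in>A. \<Sum>l\<in>A. U f (t i) * E (t i) (t l) * cnj (U g (t l)))"
proof -
  have UE: "op_mult H U E f w = (\<Sum>i\<in>A. U f (t i) * E (t i) w)" if "w \<in> H" for w
    using assms that by (simp add: op_mult_def sum_over_inj_image)
  have "op_mult H (op_mult H U E) (op_adj U) f g = (\<Sum>w\<in>H. op_mult H U E f w * cnj (U g w))"
    using assms(5,6) by (simp add: op_mult_def op_adj_def)
  also have "\<dots> = (\<Sum>l\<in>A. op_mult H U E f (t l) * cnj (U g (t l)))"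
    using assms(1-3) by (intro sum_over_inj_image) (auto simp: UE E_0)
  also have "\<dots> = (\<Sum>l\<in>A. \<Sum>i\<in>A. U f (t i) * E (t i) (t l) * cnj (U g (t l)))"
    using assms(3) by (intro sum.cong) (auto simp: UE sum_distrib_right)
  finally show ?thesis by (rule trans) (rule sum.swap)
qed

lemma U_A_unflagged:
  assumes "f \<in> Hfull d" "i < d"
  shows "U_A d f (unflagged i) = (if f = flagged i then 1 else 0)"
proof -
  have "f = flagged i \<longleftrightarrow> f 0 = i \<and> (\<forall>p\<in>{1..d}. f p = (if p = Suc i then 1 else 0))"
    using assms by (auto simp: configs_def flagged_def fun_eq_iff)
  then show ?thesis
    using assms unflagged_in_Hfull[OF assms(2)] by (auto simp: U_A_def unflagged_def)
qed

lemma ext_zero_eq_0: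
  assumes "z \<notin> unflagged ` {..<d} \<or> w \<notin> unflagged ` {..<d}"
  shows "ext_zero d \<rho> z w = 0"
proof -
  have "z = unflagged (z 0) \<and> z 0 < d" if "z \<in> Hfull d" "\<forall>p\<in>{1..d}. z p = 0" for z
    using that bspec[OF _ atLeastAtMost_iff[of 0 0 d, THEN iffD2], of "\<lambda>p. z p < qdims d p"]
    by (auto simp: configs_def qdims_def unflagged_def fun_eq_iff)
  then show ?thesis using assms by (auto simp: ext_zero_def)
qed

lemma ext_zero_unflagged: "i < d \<Longrightarrow> l < d \<Longrightarrow> ext_zero d \<rho> (unflagged i) (unflagged l) = \<rho> i l"
  by (simp add: ext_zero_def unflagged_in_Hfull) (simp add: unflagged_def)

lemma sum_sum_delta:
  assumes "finite A" "finite B" "a \<in> A" "b \<in> B"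
  shows "(\<Sum>i\<in>A. \<Sum>l\<in>B. if a = i \<and> b = l then x i l else 0) = x a b"
proof -
  have "(\<Sum>l\<in>B. if a = i \<and> b = l then x i l else 0) = (if a = i then x i b else 0)" for i
    using assms(2,4) by (cases "a = i") simp_all
  then show ?thesis using assms(1,3) by simp
qed

lemma rho1_eq:
  "rho1 d \<rho> f g = (if f \<in> flagged ` {..<d} \<and> g \<in> flagged ` {..<d} then \<rho> (f 0) (g 0) else 0)"
proof (cases "f \<in> Hfull d \<and> g \<in> Hfull d")
  case True
  then have "rho1 d \<rho> f g = (\<Sum>i<d. \<Sum>l<d. U_A d f (unflagged i) * ext_zero d \<rho> (unflagged i) (unflagged l) *
      cnj (U_A d g (unflagged l)))"
    unfolding rho1_def
    by (intro op_mult_op_adj_embedded finite_configs inj_unflagged ext_zero_eq_0)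
      (auto simp: unflagged_in_Hfull)
  also have "\<dots> = (\<Sum>i<d. \<Sum>l<d. if f = flagged i \<and> g = flagged l then \<rho> i l else 0)"
    using True by (intro sum.cong) (simp_all add: U_A_unflagged ext_zero_unflagged)
  also have "\<dots> = (if f \<in> flagged ` {..<d} \<and> g \<in> flagged ` {..<d} then \<rho> (f 0) (g 0) else 0)"
  proof (cases "f \<in> flagged ` {..<d} \<and> g \<in> flagged ` {..<d}")
    case True
    then obtain a b where "a < d" "b < d" "f = flagged a" "g = flagged b" by blast
    then show ?thesis using sum_sum_delta[of "{..<d}" "{..<d}" a b \<rho>] by (simp add: flagged_def)
  qed (auto intro!: sum.neutral)
  finally show ?thesis .
next
  case False
  then show ?thesis using flagged_in_Hfull by (auto simp: rho1_def op_mult_def)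
qed

lemma rho1_flagged: "a < d \<Longrightarrow> b < d \<Longrightarrow> rho1 d \<rho> (flagged a) (flagged b) = \<rho> a b"
  by (auto simp: rho1_eq flagged_def)

lemma rho1_eq_0: "f \<notin> flagged ` {..<d} \<or> g \<notin> flagged ` {..<d} \<Longrightarrow> rho1 d \<rho> f g = 0"
  by (auto simp: rho1_eq)

section \<open>The decoupled state\<close>

lemma upd_qudit_in_Hfull: "f \<in> configs S (qdims d) \<Longrightarrow> S \<subseteq> {0..d} \<Longrightarrow> i < d \<Longrightarrow> f(0 := i) \<in> Hfull d"
  unfolding configs_def qdims_def by (auto split: if_splits)

lemma Hfull_eq_upd_qudit:
  assumes "f \<in> Hfull d" "z \<in> Hfull d" "\<forall>p\<in>{1..d}. z p = f p"
  shows "z = f(0 := z 0)"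
proof
  fix p
  consider "p = 0" | "p \<in> {1..d}" | "p \<notin> {0..d}" by fastforce
  then show "z p = (f(0 := z 0)) p"
    using assms by cases (auto simp: configs_def)
qed

lemma inj_fun_upd: "inj (\<lambda>i. f(a := i))"
  by (rule injI) (metis fun_upd_same)

lemma Hfull_qudit_less: "f \<in> Hfull d \<Longrightarrow> f 0 < d"
proof -
  assume "f \<in> Hfull d"
  then have "f 0 < qdims d 0" by (simp add: configs_def)
  then show ?thesis by (simp add: qdims_def)
qed

lemma sum_Hfull_fiber:
  assumes f: "f \<in> Hfull d"
  shows "(\<Sum>z\<in>Hfull d. if \<forall>p\<in>{1..d}. z p = f p then G z else 0) = (\<Sum>i<d. G (f(0 := i)))"
proof -
  have "finite (Hfull d)" "inj_on (\<lambda>i. f(0 := i)) {..<d}" "(\<lambda>i. f(0 := i)) ` {..<d} \<subseteq> Hfull d"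
    using f upd_qudit_in_Hfull[OF f] by (auto simp: finite_configs intro: inj_on_subset[OF inj_fun_upd])
  then have "(\<Sum>z\<in>Hfull d. if \<forall>p\<in>{1..d}. z p = f p then G z else 0) =
      (\<Sum>i<d. if \<forall>p\<in>{1..d}. (f(0 := i)) p = f p then G (f(0 := i)) else 0)"
  proof (rule sum_over_inj_image)
    fix z assume z: "z \<in> Hfull d" "z \<notin> (\<lambda>i. f(0 := i)) ` {..<d}"
    have "\<not> (\<forall>p\<in>{1..d}. z p = f p)"
    proof
      assume "\<forall>p\<in>{1..d}. z p = f p"
      then have "z = f(0 := z 0)" using Hfull_eq_upd_qudit[OF f z(1)] by simp
      then show False using z Hfull_qudit_less[OF z(1)] by (metis image_eqI lessThan_iff)
    qed
    then show "(if \<forall>p\<in>{1..d}. z p = f p then G z else 0) = 0" by (simp only: if_False)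
  qed
  then show ?thesis by simp
qed

lemma op_mult_lift_qudit_left:
  assumes "f \<in> Hfull d" "g \<in> Hfull d"
  shows "op_mult (Hfull d) (lift_qudit d A) X f g = (\<Sum>i<d. A (f 0) i * X (f(0 := i)) g)"
proof -
  have "op_mult (Hfull d) (lift_qudit d A) X f g = (\<Sum>z\<in>Hfull d. lift_qudit d A f z * X z g)"
    using assms by (simp add: op_mult_def)
  also have "\<dots> = (\<Sum>z\<in>Hfull d. if \<forall>p\<in>{1..d}. z p = f p then A (f 0) (z 0) * X z g else 0)"
    using assms by (intro sum.cong) (auto simp: lift_qudit_def)
  also have "\<dots> = (\<Sum>i<d. A (f 0) ((f(0 := i)) 0) * X (f(0 := i)) g)"
    by (rule sum_Hfull_fiber[OF assms(1)])
  finally show ?thesis by simp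
qed

lemma op_mult_lift_qudit_right:
  assumes "f \<in> Hfull d" "g \<in> Hfull d"
  shows "op_mult (Hfull d) X (lift_qudit d B) f g = (\<Sum>i<d. X f (g(0 := i)) * B i (g 0))"
proof -
  have "op_mult (Hfull d) X (lift_qudit d B) f g = (\<Sum>z\<in>Hfull d. X f z * lift_qudit d B z g)"
    using assms by (simp add: op_mult_def)
  also have "\<dots> = (\<Sum>z\<in>Hfull d. if \<forall>p\<in>{1..d}. z p = g p then X f z * B (z 0) (g 0) else 0)"
    using assms by (intro sum.cong) (auto simp: lift_qudit_def)
  also have "\<dots> = (\<Sum>i<d. X f (g(0 := i)) * B ((g(0 := i)) 0) (g 0))"
    by (rule sum_Hfull_fiber[OF assms(2)])
  finally show ?thesis by simp
qed

lemma sum_ketbra_q: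
  assumes "m \<in> {1..d}" "a < d"
  shows "(\<Sum>j<d. ketbra_q d m a j * T j) = (if a = m - 1 then T (m - 1) else 0)"
proof -
  have "(\<Sum>j<d. ketbra_q d m a j * T j) = (\<Sum>j<d. if j = m - 1 then (if a = m - 1 then T (m - 1) else 0) else 0)"
    using assms by (intro sum.cong) (auto simp: ketbra_q_def)
  then show ?thesis using assms by simp
qed

lemma ptrace_fourier_outcome:
  assumes m: "m \<in> {1..d}" and h: "h \<in> Hqubits d" and h': "h' \<in> Hqubits d"
  shows "ptrace_qudit d
            (op_mult (Hfull d)
              (op_mult (Hfull d) (lift_qudit d (ketbra_q d m))
                (op_mult (Hfull d) (lift_qudit d (fourier d)) X))
              (lift_qudit d (op_adj (fourier d)))) h h'
       = (\<Sum>l<d. (\<Sum>i<d. fourier d (m - 1) i * X (h(0 := i)) (h'(0 := l))) * cnj (fourier d (m - 1) l))"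
    (is "ptrace_qudit d ?Z h h' = ?rhs")
proof -
  let ?FX = "op_mult (Hfull d) (lift_qudit d (fourier d)) X"
  let ?PFX = "op_mult (Hfull d) (lift_qudit d (ketbra_q d m)) ?FX"
  let ?row = "\<lambda>l. \<Sum>i<d. fourier d (m - 1) i * X (h(0 := i)) (h'(0 := l))"
  have in_Hfull: "h(0 := i) \<in> Hfull d" "h'(0 := i) \<in> Hfull d" if "i < d" for i
    using h h' that by (auto intro: upd_qudit_in_Hfull)
  have PFX: "?PFX (h(0 := a)) (h'(0 := l)) = (if a = m - 1 then ?row l else 0)" if "a < d" "l < d" for a l
    using that m in_Hfull
    by (simp add: op_mult_lift_qudit_left sum_ketbra_q[where T = "\<lambda>j. \<Sum>i<d. fourier d j i * X (h(0 := i)) (h'(0 := l))"])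
  have Z: "?Z (h(0 := a)) (h'(0 := a)) = (if a = m - 1 then ?rhs else 0)" if "a < d" for a
  proof -
    have "?Z (h(0 := a)) (h'(0 := a)) = (\<Sum>l<d. ?PFX (h(0 := a)) (h'(0 := l)) * cnj (fourier d a l))"
      using that in_Hfull by (simp add: op_mult_lift_qudit_right op_adj_def)
    also have "\<dots> = (\<Sum>l<d. (if a = m - 1 then ?row l else 0) * cnj (fourier d a l))"
      using that by (intro sum.cong) (simp_all add: PFX)
    finally show ?thesis by auto
  qed
  have "ptrace_qudit d ?Z h h' = (\<Sum>a<d. if a = m - 1 then ?rhs else 0)"
    using h h' Z by (simp add: ptrace_qudit_def)
  also have "\<dots> = ?rhs" using m by (subst sum.delta) auto
  finally show ?thesis .
qed

lemma op_mult_U_D_left: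
  assumes "h \<in> Hqubits d" "h' \<in> Hqubits d"
  shows "op_mult (Hqubits d) (U_D d m) Y h h' = U_D d m h h * Y h h'"
proof -
  have "op_mult (Hqubits d) (U_D d m) Y h h' = (\<Sum>w\<in>Hqubits d. if w = h then U_D d m h h * Y h h' else 0)"
    using assms by (auto simp: op_mult_def U_D_def intro!: sum.cong)
  then show ?thesis using assms finite_configs[of "{1..d}"] by simp
qed

lemma op_mult_U_D_right:
  assumes "h \<in> Hqubits d" "h' \<in> Hqubits d"
  shows "op_mult (Hqubits d) Y (op_adj (U_D d m)) h h' = Y h h' * cnj (U_D d m h' h')"
proof -
  have "op_mult (Hqubits d) Y (op_adj (U_D d m)) h h' = (\<Sum>w\<in>Hqubits d. if w = h' then Y h h' * cnj (U_D d m h' h') else 0)"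
    using assms by (auto simp: op_mult_def op_adj_def U_D_def intro!: sum.cong)
  then show ?thesis using assms finite_configs[of "{1..d}"] by simp
qed

lemma U_D_flag_mult_fourier:
  assumes "a < d" "m \<in> {1..d}"
  shows "U_D d m (flag a) (flag a) * fourier d (m - 1) a = 1 / of_real (sqrt (real d))"
proof -
  define x where "x = 2 * of_real pi * \<i> * of_nat (Suc a * m) / (of_nat d :: complex)"
  have "U_D d m (flag a) (flag a) =
      (\<Prod>j\<in>{1..d}. if flag a j = 1 then exp (- 2 * of_real pi * \<i> * of_nat (j * m) / of_nat d) else 1)"
    using flag_in_Hqubits[OF assms(1)] by (simp add: U_D_def)
  also have "\<dots> = (\<Prod>j\<in>{1..d}. if j = Suc a then exp (- x) else 1)"
    by (intro prod.cong) (simp_all add: flag_def x_def)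
  also have "\<dots> = exp (- x)" using assms(1) by simp
  finally have "U_D d m (flag a) (flag a) = exp (- x)" .
  moreover have "fourier d (m - 1) a = exp x / of_real (sqrt (real d))"
    using assms by (auto simp: fourier_def x_def mult.commute)
  ultimately show ?thesis by (simp add: exp_minus field_simps)
qed

lemma upd_qudit_in_flagged_iff:
  assumes "h \<in> Hqubits d"
  shows "h(0 := i) \<in> flagged ` {..<d} \<longleftrightarrow> i < d \<and> h = flag i"
proof -
  have "h 0 = 0" using assms by (simp add: configs_def)
  then have "h(0 := i) = flagged a \<longleftrightarrow> i = a \<and> h = flag a" for a
    by (auto simp: fun_eq_iff flagged_def flag_def)
  then show ?thesis by (auto simp: image_iff)
qed

lemma rho1_upd_qudit:
  assumes "h \<in> Hqubits d" "h' \<in> Hqubits d"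
  shows "rho1 d \<rho> (h(0 := i)) (h'(0 := l)) = (if i < d \<and> h = flag i \<and> l < d \<and> h' = flag l then \<rho> i l else 0)"
  by (simp add: rho1_eq upd_qudit_in_flagged_iff[OF assms(1)] upd_qudit_in_flagged_iff[OF assms(2)])

lemma rho2_eq_sum:
  assumes "h \<in> Hqubits d" "h' \<in> Hqubits d"
  shows "rho2 d \<rho> h h' = (\<Sum>m\<in>{1..d}. U_D d m h h *
      (\<Sum>l<d. (\<Sum>i<d. fourier d (m - 1) i * rho1 d \<rho> (h(0 := i)) (h'(0 := l))) * cnj (fourier d (m - 1) l)) *
      cnj (U_D d m h' h'))"
  unfolding rho2_def Delta_def using assms
  by (intro sum.cong refl)
    (simp only: op_mult_U_D_left[OF assms] op_mult_U_D_right[OF assms] ptrace_fourier_outcome[OF _ assms])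

lemma sum_fourier_rho1_flag:
  assumes "a < d" "b < d"
  shows "(\<Sum>l<d. (\<Sum>i<d. A i * rho1 d \<rho> ((flag a)(0 := i)) ((flag b)(0 := l))) * B l) = A a * \<rho> a b * B b"
proof -
  have "(\<Sum>i<d. A i * rho1 d \<rho> ((flag a)(0 := i)) ((flag b)(0 := l))) = (if l = b then A a * \<rho> a b else 0)"
    if "l < d" for l
    using assms that
    by (simp add: rho1_upd_qudit[OF flag_in_Hqubits flag_in_Hqubits] if_distrib[of "\<lambda>x. A _ * x"] cong: if_cong)
  then show ?thesis using assms(2) by (simp add: if_distrib[of "\<lambda>x. x * B _"] cong: if_cong)
qed

lemma rho2_flag:
  assumes "a < d" "b < d"
  shows "rho2 d \<rho> (flag a) (flag b) = \<rho> a b"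
proof -
  have sqrt_sq: "complex_of_real (sqrt (real d)) * complex_of_real (sqrt (real d)) = of_nat d"
    by (metis of_real_mult of_real_of_nat_eq real_sqrt_mult_self abs_of_nat)
  have "U_D d m (flag a) (flag a) * (fourier d (m - 1) a * \<rho> a b * cnj (fourier d (m - 1) b)) *
      cnj (U_D d m (flag b) (flag b)) = \<rho> a b / of_nat d" if "m \<in> {1..d}" for m
  proof -
    have "U_D d m (flag a) (flag a) * (fourier d (m - 1) a * \<rho> a b * cnj (fourier d (m - 1) b)) *
        cnj (U_D d m (flag b) (flag b)) = (U_D d m (flag a) (flag a) * fourier d (m - 1) a) * \<rho> a b *
        cnj (U_D d m (flag b) (flag b) * fourier d (m - 1) b)"
      by (simp add: ac_simps)
    also have "\<dots> = \<rho> a b / (complex_of_real (sqrt (real d)) * complex_of_real (sqrt (real d)))"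
      unfolding U_D_flag_mult_fourier[OF assms(1) that] U_D_flag_mult_fourier[OF assms(2) that] by simp
    finally show ?thesis unfolding sqrt_sq .
  qed
  then show ?thesis
    using assms by (simp add: rho2_eq_sum[OF flag_in_Hqubits flag_in_Hqubits] sum_fourier_rho1_flag)
qed

lemma rho2_eq_0:
  assumes "f \<notin> flag ` {..<d} \<or> g \<notin> flag ` {..<d}"
  shows "rho2 d \<rho> f g = 0"
proof (cases "f \<in> Hqubits d \<and> g \<in> Hqubits d")
  case True
  then have "rho1 d \<rho> (f(0 := i)) (g(0 := l)) = 0" for i l
    using assms by (auto simp: rho1_upd_qudit)
  then show ?thesis using True by (simp add: rho2_eq_sum)
next
  case False
  then show ?thesis by (auto simp: rho2_def Delta_def op_mult_def intro!: sum.neutral)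
qed

section \<open>Coherence number and entanglement depth\<close>

definition rank_bounded_decomp :: "nat \<Rightarrow> (nat \<Rightarrow> nat \<Rightarrow> complex) \<Rightarrow> nat \<Rightarrow> bool" where
  "rank_bounded_decomp d \<rho> j \<longleftrightarrow> (\<exists>ps. pure_decomp {..<d} \<rho> ps \<and> (\<forall>(p, c) \<in> set ps. coh_rank d c \<le> j))"

lemma coh_number_le_iff:
  assumes "\<exists>ps. pure_decomp {..<d} \<rho> ps"
  shows "coh_number d \<rho> \<le> j \<longleftrightarrow> rank_bounded_decomp d \<rho> j"
proof -
  define M where "M ps = Max ((\<lambda>(p, v). coh_rank d v) ` set ps)" for ps :: "(real \<times> (nat \<Rightarrow> complex)) list"
  define D where "D = {ps. pure_decomp {..<d} \<rho> ps}"
  have M_le: "M ps \<le> j \<longleftrightarrow> (\<forall>(p, c) \<in> set ps. coh_rank d c \<le> j)" if "ps \<in> D" for ps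
  proof -
    have "set ps \<noteq> {}" using that by (auto simp: D_def pure_decomp_def)
    then show ?thesis by (auto simp: M_def)
  qed
  have CN: "coh_number d \<rho> = Inf (M ` D)" unfolding coh_number_def D_def M_def ..
  have "M ` D \<noteq> {}" using assms by (auto simp: D_def)
  then obtain ps0 where ps0: "ps0 \<in> D" "coh_number d \<rho> = M ps0"
    using Inf_nat_def1[of "M ` D"] CN by auto
  show ?thesis
  proof
    assume "coh_number d \<rho> \<le> j"
    then show "rank_bounded_decomp d \<rho> j" using ps0 M_le by (auto simp: rank_bounded_decomp_def D_def)
  next
    assume "rank_bounded_decomp d \<rho> j"
    then obtain ps where "ps \<in> D" "M ps \<le> j" using M_le by (auto simp: rank_bounded_decomp_def D_def)
    then show "coh_number d \<rho> \<le> j" using CN cInf_lower[of "M ps" "M ` D"] by fastforce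
  qed
qed

lemma state_nonzero: "is_state A c \<Longrightarrow> \<exists>i\<in>A. c i \<noteq> 0"
  by (rule ccontr) (simp add: is_state_def)

lemma density_op_eq_0: "density_op A \<rho> \<Longrightarrow> a \<notin> A \<or> b \<notin> A \<Longrightarrow> \<rho> a b = 0"
  unfolding density_op_def by blast

lemma k_producible_rho1_iff:
  assumes dens: "density_op {..<d} \<rho>" and "2 \<le> j"
  shows "k_producible {0..d} (qdims d) j (rho1 d \<rho>) \<longleftrightarrow> rank_bounded_decomp d \<rho> (j - 1)"
proof -
  have embed: "finite {..<d}" "finite (Hfull d)" "inj_on flagged {..<d}" "flagged ` {..<d} \<subseteq> Hfull d"
    "\<And>a b. a \<in> {..<d} \<Longrightarrow> b \<in> {..<d} \<Longrightarrow> rho1 d \<rho> (flagged a) (flagged b) = \<rho> a b"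
    by (auto simp: finite_configs inj_flagged flagged_in_Hfull rho1_flagged)
  show ?thesis
  proof
    assume "k_producible {0..d} (qdims d) j (rho1 d \<rho>)"
    then obtain qs where pd: "pure_decomp (Hfull d) (rho1 d \<rho>) qs"
      and kp: "\<forall>(p, v) \<in> set qs. k_producible_pure {0..d} (qdims d) j v"
      unfolding k_producible_def by blast
    note pull = pure_decomp_pull[where R = "rho1 d \<rho>", OF embed rho1_eq_0 density_op_eq_0[OF dens] pd]
    have "coh_rank d (pull_vec flagged {..<d} v) \<le> j - 1" if "(p, v) \<in> set qs" for p v
      using kp pull(1) that k_producible_lift_flagged_iff[OF assms(2)] by fastforce
    then show "rank_bounded_decomp d \<rho> (j - 1)"
      using pull(2) unfolding rank_bounded_decomp_def by fastforce
  next
    assume "rank_bounded_decomp d \<rho> (j - 1)"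
    then obtain ps where pd: "pure_decomp {..<d} \<rho> ps" and r: "\<forall>(p, c) \<in> set ps. coh_rank d c \<le> j - 1"
      unfolding rank_bounded_decomp_def by blast
    have "pure_decomp (Hfull d) (rho1 d \<rho>) (map (\<lambda>(p, c). (p, lift_vec flagged {..<d} c)) ps)"
      by (rule pure_decomp_lift[where R = "rho1 d \<rho>", OF embed rho1_eq_0 pd])
    moreover have "\<forall>(p, v) \<in> set (map (\<lambda>(p, c). (p, lift_vec flagged {..<d} c)) ps).
        k_producible_pure {0..d} (qdims d) j v"
      using r k_producible_lift_flagged_iff[OF assms(2)] by auto
    ultimately show "k_producible {0..d} (qdims d) j (rho1 d \<rho>)" unfolding k_producible_def by blast
  qed
qed

lemma k_producible_rho2_iff:
  assumes dens: "density_op {..<d} \<rho>" and "1 \<le> j"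
  shows "k_producible {1..d} (qdims d) j (rho2 d \<rho>) \<longleftrightarrow> rank_bounded_decomp d \<rho> j"
proof -
  have "flag ` {..<d} \<subseteq> Hqubits d" using flag_in_Hqubits by blast
  then have embed: "finite {..<d}" "finite (Hqubits d)" "inj_on flag {..<d}" "flag ` {..<d} \<subseteq> Hqubits d"
    "\<And>a b. a \<in> {..<d} \<Longrightarrow> b \<in> {..<d} \<Longrightarrow> rho2 d \<rho> (flag a) (flag b) = \<rho> a b"
    by (simp_all add: finite_configs inj_flag rho2_flag)
  have lift_iff: "k_producible_pure {1..d} (qdims d) j (lift_vec flag {..<d} c) \<longleftrightarrow> coh_rank d c \<le> j"
    if "is_state {..<d} c" for c
    using state_nonzero[OF that] k_producible_lift_flag_iff[OF assms(2)] by blast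
  show ?thesis
  proof
    assume "k_producible {1..d} (qdims d) j (rho2 d \<rho>)"
    then obtain qs where pd: "pure_decomp (Hqubits d) (rho2 d \<rho>) qs"
      and kp: "\<forall>(p, v) \<in> set qs. k_producible_pure {1..d} (qdims d) j v"
      unfolding k_producible_def by blast
    note pull = pure_decomp_pull[where R = "rho2 d \<rho>", OF embed rho2_eq_0 density_op_eq_0[OF dens] pd]
    have "coh_rank d (pull_vec flag {..<d} v) \<le> j" if "(p, v) \<in> set qs" for p v
    proof -
      have "is_state {..<d} (pull_vec flag {..<d} v)"
        using pull(2) that unfolding pure_decomp_def by fastforce
      then show ?thesis using kp pull(1) that lift_iff by fastforce
    qed
    then show "rank_bounded_decomp d \<rho> j"
      using pull(2) unfolding rank_bounded_decomp_def by fastforce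
  next
    assume "rank_bounded_decomp d \<rho> j"
    then obtain ps where pd: "pure_decomp {..<d} \<rho> ps" and r: "\<forall>(p, c) \<in> set ps. coh_rank d c \<le> j"
      unfolding rank_bounded_decomp_def by blast
    have "pure_decomp (Hqubits d) (rho2 d \<rho>) (map (\<lambda>(p, c). (p, lift_vec flag {..<d} c)) ps)"
      by (rule pure_decomp_lift[where R = "rho2 d \<rho>", OF embed rho2_eq_0 pd])
    moreover have "k_producible_pure {1..d} (qdims d) j (lift_vec flag {..<d} c)" if "(p, c) \<in> set ps" for p c
    proof -
      have "is_state {..<d} c" using pd that unfolding pure_decomp_def by blast
      then show ?thesis using lift_iff r that by blast
    qed
    ultimately show "k_producible {1..d} (qdims d) j (rho2 d \<rho>)" unfolding k_producible_def by fastforce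
  qed
qed

theorem theorem2:
  fixes d k :: nat and \<rho> :: "nat \<Rightarrow> nat \<Rightarrow> complex"
  assumes "density_op {..<d} \<rho>"
    and "2 \<le> k" and "k \<le> d"
  shows "(coh_number d \<rho> = k \<longleftrightarrow> ent_depth_is {0..d} (qdims d) (rho1 d \<rho>) (k + 1))
       \<and> (ent_depth_is {0..d} (qdims d) (rho1 d \<rho>) (k + 1) \<longleftrightarrow> ent_depth_is {1..d} (qdims d) (rho2 d \<rho>) k)"
proof -
  let ?R = "rank_bounded_decomp d \<rho>"
  have "coh_number d \<rho> = k \<longleftrightarrow> coh_number d \<rho> \<le> k \<and> \<not> coh_number d \<rho> \<le> k - 1"
    using assms(2) by linarith
  then have "coh_number d \<rho> = k \<longleftrightarrow> ?R k \<and> \<not> ?R (k - 1)"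
    by (simp add: coh_number_le_iff[OF density_op_pure_decomp_exists[OF assms(1)]])
  moreover have "ent_depth_is {0..d} (qdims d) (rho1 d \<rho>) (k + 1) \<longleftrightarrow> ?R k \<and> \<not> ?R (k - 1)"
    using k_producible_rho1_iff[OF assms(1), of "k + 1"] k_producible_rho1_iff[OF assms(1), of k] assms(2)
    by (simp add: ent_depth_is_def)
  moreover have "ent_depth_is {1..d} (qdims d) (rho2 d \<rho>) k \<longleftrightarrow> ?R k \<and> \<not> ?R (k - 1)"
    using k_producible_rho2_iff[OF assms(1), of k] k_producible_rho2_iff[OF assms(1), of "k - 1"] assms(2)
    by (simp add: ent_depth_is_def)
  ultimately show ?thesis by blast
qed

end
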